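(* Let $x \in \mathbb{Z}$ and let $n \in \mathbb{N}$ be odd with $n \geq 5$, and suppose $x^2 + 7 = 2^n$. Then $n - 2 \equiv 3$, $5$, or $13 \pmod{42}$. *)

theory Defs
  imports Main
begin

end

theory Submission
  imports Defs
begin

text \<open>Put \<open>\<omega> = (1 + \<surd>-7) / 2\<close>, so that \<open>\<omega>\<^sup>2 = \<omega> - 2\<close> and \<open>a + b\<omega>\<close> has norm \<open>a\<^sup>2 + ab + 2b\<^sup>2\<close>.
  From \<open>x\<^sup>2 + 7 = 2\<^sup>n\<close> with \<open>x = 2a + 1\<close> one gets \<open>a\<^sup>2 + a + 2 = 2\<^sup>n\<^sup>-\<^sup>2\<close>, i.e. \<open>a + \<omega>\<close> has
  norm \<open>2\<^sup>n\<^sup>-\<^sup>2\<close>. Since \<open>2 = \<omega>\<omega>'\<close> with \<open>\<omega>'\<close> the conjugate of \<open>\<omega>\<close>, and \<open>a + \<omega>\<close> is not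
  divisible by \<open>2\<close>, descent on the exponent shows \<open>a + \<omega> = \<plusminus>\<omega>\<^sup>n\<^sup>-\<^sup>2\<close> up to conjugation. Hence
  the \<open>\<omega>\<close>-coefficient \<open>v\<^sub>m\<close> of \<open>\<omega>\<^sup>m\<close> is \<open>\<plusminus>1\<close> for \<open>m = n - 2\<close>. The recurrence
  \<open>v\<^sub>m\<^sub>+\<^sub>2 = v\<^sub>m\<^sub>+\<^sub>1 - 2v\<^sub>m\<close> gives \<open>v\<^sub>m \<equiv> 3 (mod 4)\<close> for odd \<open>m \<ge> 3\<close>, so \<open>v\<^sub>m = -1\<close>, and
  \<open>v\<^sub>m mod 7\<close> has period 21 and equals \<open>6\<close> exactly for \<open>m \<equiv> 3, 5, 13 (mod 21)\<close>.\<close>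

lemma linear_recurrence_shift_mod:
  fixes f :: "nat \<Rightarrow> 'a::euclidean_semiring_cancel"
  assumes rec: "\<And>m. f (m + 2) = c * f (m + 1) + d * f m"
    and per0: "f (k + p) mod q = f k mod q"
    and per1: "f (k + p + 1) mod q = f (k + 1) mod q"
  shows "f (k + i + p) mod q = f (k + i) mod q"
proof -
  have "f (k + i + p) mod q = f (k + i) mod q \<and> f (k + i + p + 1) mod q = f (k + i + 1) mod q"
  proof (induction i)
    case 0
    then show ?case using per0 per1 by simp
  next
    case (Suc i)
    have "f (k + i + p + 2) mod q = f (k + i + 2) mod q"
      unfolding rec using Suc.IH by (intro mod_add_cong mod_mult_cong) simp_all
    with Suc.IH show ?case by (simp add: add.commute add.left_commute)
  qed
  then show ?thesis ..
qed

lemma linear_recurrence_mod_periodic: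
  fixes f :: "nat \<Rightarrow> 'a::euclidean_semiring_cancel"
  assumes rec: "\<And>m. f (m + 2) = c * f (m + 1) + d * f m"
    and per0: "f (k + p) mod q = f k mod q"
    and per1: "f (k + p + 1) mod q = f (k + 1) mod q"
    and "k \<le> m"
  shows "f m mod q = f (k + (m - k) mod p) mod q"
proof -
  have "f (k + i + j * p) mod q = f (k + i) mod q" for i j
  proof (induction j)
    case (Suc j)
    have "f (k + i + Suc j * p) mod q = f (k + (i + j * p) + p) mod q"
      by (simp add: algebra_simps)
    also have "\<dots> = f (k + i + j * p) mod q"
      using linear_recurrence_shift_mod[OF rec per0 per1, of "i + j * p"] by (simp add: add.assoc)
    finally show ?case using Suc.IH by simp
  qed simp
  from this[of "(m - k) mod p" "(m - k) div p"] show ?thesis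
    using \<open>k \<le> m\<close> by (simp add: add.commute)
qed

text \<open>The pair \<open>(u, v)\<close> stands for \<open>u + v\<omega>\<close>, and \<open>omega_pow m\<close> for \<open>\<omega>\<^sup>m\<close>:
  \<open>(u + v\<omega>)\<omega> = -2v + (u + v)\<omega>\<close>. Conjugation is \<open>(a, b) \<mapsto> (a + b, -b)\<close>.\<close>

fun omega_pow :: "nat \<Rightarrow> int \<times> int" where
  "omega_pow 0 = (1, 0)"
| "omega_pow (Suc m) = (case omega_pow m of (u, v) \<Rightarrow> (- 2 * v, u + v))"

lemma omega_pow_Suc_fst_snd:
  "omega_pow (Suc m) = (- 2 * snd (omega_pow m), fst (omega_pow m) + snd (omega_pow m))"
  by (simp split: prod.split)

declare omega_pow.simps(2) [simp del]

lemma even_fst_omega_pow: "m \<noteq> 0 \<Longrightarrow> even (fst (omega_pow m))"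
  by (cases m) (simp_all add: omega_pow_Suc_fst_snd)

lemma snd_omega_pow_rec:
  "snd (omega_pow (m + 2)) = snd (omega_pow (m + 1)) - 2 * snd (omega_pow m)"
  by (simp add: omega_pow_Suc_fst_snd)

lemma snd_omega_pow_mod_periodic:
  assumes "snd (omega_pow (k + p)) mod q = snd (omega_pow k) mod q"
    and "snd (omega_pow (k + p + 1)) mod q = snd (omega_pow (k + 1)) mod q"
    and "k \<le> m"
  shows "snd (omega_pow m) mod q = snd (omega_pow (k + (m - k) mod p)) mod q"
proof -
  have "snd (omega_pow (i + 2)) = 1 * snd (omega_pow (i + 1)) + (- 2) * snd (omega_pow i)" for i
    using snd_omega_pow_rec by simp
  from linear_recurrence_mod_periodic[OF this assms] show ?thesis .
qed

lemma snd_omega_pow_mod_4: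
  assumes "odd m" and "3 \<le> m"
  shows "snd (omega_pow m) mod 4 = 3"
proof -
  have "snd (omega_pow (2 + 2)) mod 4 = snd (omega_pow 2) mod 4"
    and "snd (omega_pow (2 + 2 + 1)) mod 4 = snd (omega_pow (2 + 1)) mod 4"
    by (simp_all add: eval_nat_numeral omega_pow.simps)
  moreover have "odd (m - 2)"
    using assms by simp
  then have "2 + (m - 2) mod 2 = 3"
    by (simp only: odd_iff_mod_2_eq_one)
  ultimately have "snd (omega_pow m) mod 4 = snd (omega_pow 3) mod 4"
    using snd_omega_pow_mod_periodic[of 2 2 4 m] assms(2) by simp
  then show ?thesis
    by (simp add: eval_nat_numeral omega_pow.simps)
qed

lemma snd_omega_pow_mod_7:
  "snd (omega_pow m) mod 7 = snd (omega_pow (m mod 21)) mod 7"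
proof -
  have "snd (omega_pow (0 + 21)) mod 7 = snd (omega_pow 0) mod 7"
    and "snd (omega_pow (0 + 21 + 1)) mod 7 = snd (omega_pow (0 + 1)) mod 7"
    by (simp_all add: eval_nat_numeral omega_pow.simps)
  from snd_omega_pow_mod_periodic[OF this] show ?thesis
    by simp
qed

lemma snd_omega_pow_mod_7_eq_6:
  assumes "snd (omega_pow m) mod 7 = 6"
  shows "m mod 21 \<in> {3, 5, 13}"
proof -
  have "\<forall>r \<in> set [0..<21]. snd (omega_pow r) mod 7 = 6 \<longrightarrow> r \<in> {3, 5, 13}"
    by (simp add: eval_nat_numeral upt_rec omega_pow.simps)
  then show ?thesis
    using assms snd_omega_pow_mod_7[of m] by simp
qed

definition assoc_omega_pow :: "nat \<Rightarrow> int \<Rightarrow> int \<Rightarrow> bool" where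
  "assoc_omega_pow m a b \<longleftrightarrow>
     (\<exists>s \<in> {1, -1}. omega_pow m = (s * a, s * b) \<or> omega_pow m = (s * (a + b), - s * b))"

lemma assoc_omega_pow_conj: "assoc_omega_pow m (a + b) (- b) \<longleftrightarrow> assoc_omega_pow m a b"
  by (auto simp: assoc_omega_pow_def)

lemma assoc_omega_pow_snd:
  "assoc_omega_pow m a b \<Longrightarrow> snd (omega_pow m) = b \<or> snd (omega_pow m) = - b"
  by (auto simp: assoc_omega_pow_def)

lemma assoc_omega_pow_Suc:
  assumes "assoc_omega_pow m (c + b) (- c)" and "odd b"
  shows "assoc_omega_pow (Suc m) (2 * c) b"
proof -
  obtain s where s: "s \<in> {1, -1}"
    and "omega_pow m = (s * (c + b), s * - c) \<or> omega_pow m = (s * (c + b + - c), - s * - c)"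
    using assms(1) unfolding assoc_omega_pow_def by blast
  then have "omega_pow m = (s * (c + b), - s * c) \<or> omega_pow m = (s * b, s * c)"
    by simp
  then consider "omega_pow m = (s * (c + b), - s * c)" | "omega_pow m = (s * b, s * c)"
    by blast
  then show ?thesis
  proof cases
    case 1
    then have "omega_pow (Suc m) = (s * (2 * c), s * b)"
      by (simp add: omega_pow_Suc_fst_snd algebra_simps)
    with s show ?thesis unfolding assoc_omega_pow_def by blast
  next
    case 2
    \<comment> \<open>otherwise \<open>2 = \<omega>\<omega>'\<close> would divide \<open>2c + b\<omega> = \<plusminus>\<omega> \<omega>'\<^sup>m\<close>, with \<open>b\<close> odd\<close>
    have "m = 0"
    proof (rule ccontr)
      assume "m \<noteq> 0"
      then have "even (s * b)"
        using even_fst_omega_pow[of m] 2 by simp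
      with s \<open>odd b\<close> show False
        by (auto simp: even_mult_iff)
    qed
    with 2 have "s * b = 1" and "s * c = 0"
      by simp_all
    with s have "c = 0"
      by auto
    with \<open>s * b = 1\<close> have "omega_pow (Suc m) = (s * (2 * c), s * b)"
      by (simp add: \<open>m = 0\<close> omega_pow_Suc_fst_snd)
    with s show ?thesis unfolding assoc_omega_pow_def by blast
  qed
qed

lemma norm_eq_one:
  fixes a b :: int
  assumes "a^2 + a*b + 2*b^2 = 1"
  shows "b = 0 \<and> (a = 1 \<or> a = -1)"
proof -
  have four: "(2*a + b)^2 + 7*b^2 = 4"
    using assms by (simp add: algebra_simps power2_eq_square)
  have "b = 0"
  proof (rule ccontr)
    assume "b \<noteq> 0"
    then have "b^2 \<ge> 1"
      by (simp add: int_one_le_iff_zero_less)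
    with four show False
      using zero_le_power2[of "2*a + b"] by linarith
  qed
  with assms show ?thesis
    by (simp add: power2_eq_1_iff)
qed

lemma assoc_omega_pow_if_norm_power_of_two:
  fixes a b :: int
  assumes "a^2 + a*b + 2*b^2 = 2^m" and "odd a \<or> odd b"
  shows "assoc_omega_pow m a b"
  using assms
proof (induction m arbitrary: a b)
  case 0
  then show ?case
    using norm_eq_one[of a b] by (auto simp: assoc_omega_pow_def)
next
  case (Suc m)
  have even_case: "assoc_omega_pow (Suc m) a b"
    if norm: "a^2 + a*b + 2*b^2 = 2^Suc m" and prim: "odd a \<or> odd b" and "even a" for a b
  proof -
    obtain c where c: "a = 2 * c"
      using \<open>even a\<close> by blast
    have "(c + b)^2 + (c + b) * (- c) + 2 * (- c)^2 = 2^m"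
      using norm by (simp add: c algebra_simps power2_eq_square)
    moreover have "odd (c + b) \<or> odd (- c)"
      using prim c by auto
    ultimately have "assoc_omega_pow m (c + b) (- c)"
      by (rule Suc.IH)
    then show ?thesis
      using assoc_omega_pow_Suc prim c by auto
  qed
  have "even (a^2 + a*b + 2*b^2)"
    using Suc.prems(1) by simp
  then have "even a \<or> even (a + b)"
    by (simp add: power2_eq_square algebra_simps flip: distrib_left)
  then show ?case
  proof
    assume "even a"
    then show ?thesis
      using even_case Suc.prems by blast
  next
    assume "even (a + b)"
    have "(a + b)^2 + (a + b) * (- b) + 2 * (- b)^2 = 2^Suc m"
      using Suc.prems(1) by (simp add: algebra_simps power2_eq_square)
    moreover have "odd (a + b) \<or> odd (- b)"
      using Suc.prems(2) by auto
    ultimately have "assoc_omega_pow (Suc m) (a + b) (- b)"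
      using even_case \<open>even (a + b)\<close> by blast
    then show ?thesis
      using assoc_omega_pow_conj by blast
  qed
qed

lemma mod_42_if_odd:
  fixes m :: nat
  assumes "odd m"
  shows "m mod 42 = (if odd (m mod 21) then m mod 21 else m mod 21 + 21)"
proof -
  have "m mod 42 = m mod 21 \<or> m mod 42 = m mod 21 + 21"
    using mod_mult2_eq[of m 21 2] by (auto simp: mod2_eq_if split: if_splits)
  moreover have "odd (m mod 42)"
    using assms by (simp add: odd_iff_mod_2_eq_one mod_mod_cancel)
  ultimately show ?thesis by auto
qed

theorem mainTheorem3:
  fixes x :: int and n :: nat
  assumes "odd n" and "n \<ge> 5" and "x ^ 2 + 7 = 2 ^ n"
  shows "(n - 2) mod 42 \<in> {3, 5, 13}"
proof -
  define m where "m = n - 2"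
  have n: "n = m + 2" and "odd m" and "3 \<le> m"
    using assms(1,2) by (auto simp: m_def)
  have "even (x^2 + 7)"
    unfolding assms(3) n by simp
  then have "odd x"
    by simp
  then obtain a where x: "x = 2 * a + 1"
    by (metis oddE)
  have "a^2 + a*1 + 2*1^2 = 2^m"
    using assms(3) by (simp add: x n power_add power2_eq_square algebra_simps)
  then have "snd (omega_pow m) = 1 \<or> snd (omega_pow m) = -1"
    by (intro assoc_omega_pow_snd assoc_omega_pow_if_norm_power_of_two) simp_all
  with snd_omega_pow_mod_4[OF \<open>odd m\<close> \<open>3 \<le> m\<close>] have "snd (omega_pow m) = -1"
    by auto
  then have "m mod 21 \<in> {3, 5, 13}"
    by (intro snd_omega_pow_mod_7_eq_6) simp
  then show ?thesis
    using mod_42_if_odd[OF \<open>odd m\<close>] by (auto simp: m_def)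
qed

end
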